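(* Let $q=3$, with $G_3$-orbits of planes $\mathcal N_1,\dots,\mathcal N_4$ and of points $\mathcal M_1,\dots,\mathcal M_4$ as in the context. For each pair $(\mathcal N_i,\mathcal M_j)$ every plane of $\mathcal N_i$ contains exactly $t_{ij}$ points of $\mathcal M_j$ and every point of $\mathcal M_j$ lies on exactly $b_{ij}$ planes of $\mathcal N_i$, where, listing $(t_{ij},b_{ij})$ for $j=4,1,3,2$ in this order: $\mathcal N_2$: $(3,3),(2,6),(4,6),(4,3)$; $\mathcal N_3$: $(6,2),(3,3),(0,0),(4,1)$; $\mathcal N_4$: $(6,4),(0,0),(3,3),(4,2)$; $\mathcal N_1$: $(3,4),(1,4),(2,4),(7,7)$.
   Context: Notation. $\mathbb F_q$ is the field with $q$ elements, $\mathbb F_q^+=\mathbb F_q\cup\{\infty\}$. Points of $\mathrm{PG}(3,q)$ are written $\mathbf P(x_0,x_1,x_2,x_3)$ with $x$ a nonzero row vector up to scalars; $\boldsymbol\pi(c_0,c_1,c_2,c_3)$ is the plane $c_0x_0+c_1x_1+c_2x_2+c_3x_3=0$. Put $P(t)=\mathbf P(t^3,t^2,t,1)$ for $t\in\mathbb F_q$, $P(\infty)=\mathbf P(1,0,0,0)$, and $\mathscr C=\{P(t):t\in\mathbb F_q^+\}$ (the twisted cubic). The osculating planes are $\pi_{\rm osc}(t)=\boldsymbol\pi(1,-3t,3t^2,-t^3)$ ($t\in\mathbb F_q$) and $\pi_{\rm osc}(\infty)=\boldsymbol\pi(0,0,0,1)$; these $q+1$ planes are called $\Gamma$-planes. The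 tangent at $P(t)$, $t\in\mathbb F_q$, is the line through $P(t)$ and $\mathbf P(3t^2,2t,1,0)$; the tangent at $P(\infty)$ is the line through $\mathbf P(1,0,0,0)$ and $\mathbf P(0,1,0,0)$. A real chord is a line through two distinct points of $\mathscr C$. For $\alpha\in\mathbb F_{q^2}\setminus\mathbb F_q$, the line of $\mathrm{PG}(3,q^2)$ through $P(\alpha),P(\alpha^q)$ is defined over $\mathbb F_q$, and the corresponding line of $\mathrm{PG}(3,q)$ is an imaginary chord. $G_q$ is the group of all projectivities of $\mathrm{PG}(3,q)$ mapping $\mathscr C$ onto itself. Plane types: $\Gamma$-plane = osculating plane; $\overline{1_{\mathscr C}}$-plane = non-osculating plane meeting $\mathscr C$ in exactly one point; $d_{\mathscr C}$-plane ($d\in\{0,2,3\}$) = plane meeting $\mathscr C$ in exactly $d$ points. For $q=3$ all four $\Gamma$-planes contain the line $\mathcal A:\ x_0=x_3=0$. Point types for $q=3$: $\mathscr C$-point = point of $\mathscr C$; $4_\Gamma$-point = point of $\mathcal A$; TO-point = point not in $\mathscr C\cup\mathcal A$ lying on a tangent; RC-point = point not in $\mathscr C\cup\mathcal A$, on no tangent, lying on a real chord; IC-point = any point of none of the previous types. The $G_3$-orbits are: planes $\mathcal N_1=\{\Gamma\text{- and }\overline{1_{\mathscr C}}\text{-planes}\}$ (16), $\mathcal N_2=\{2_{\mathscr C}\text{-planes}\}$ (12), $\mathcal N_3=\{3_{\mathscr C}\text{-planes}\}$ (4), $\mathcal N_4=\{0_{\mathscr C}\text{-planes}\}$ (8);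 points $\mathcal M_1=\{\mathscr C\text{-points}\}$ (4), $\mathcal M_2=\{4_\Gamma\text{- and IC-points}\}$ (16), $\mathcal M_3=\{\text{TO-points}\}$ (8), $\mathcal M_4=\{\text{RC-points}\}$ (12). *)

theory Defs
  imports Main
begin

definition F3 :: "int set" where "F3 = {0,1,2}"

definition vecs :: "int list set" where
  "vecs = {[a,b,c,d] | a b c d. a \<in> F3 \<and> b \<in> F3 \<and> c \<in> F3 \<and> d \<in> F3}"

definition nzvecs :: "int list set" where
  "nzvecs = vecs - {[0,0,0,0]}"

definition smult3 :: "int \<Rightarrow> int list \<Rightarrow> int list" where
  "smult3 l v = map (\<lambda>x. (l * x) mod 3) v"

definition lincomb3 :: "int \<Rightarrow> int list \<Rightarrow> int \<Rightarrow> int list \<Rightarrow> int list" where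
  "lincomb3 a u b v = map2 (\<lambda>x y. (a * x + b * y) mod 3) u v"

definition dot3 :: "int list \<Rightarrow> int list \<Rightarrow> int" where
  "dot3 c x = (sum_list (map2 (*) c x)) mod 3"

text \<open>A projective point (or plane) is the class of a nonzero vector up to nonzero scalars.\<close>
definition PP :: "int list \<Rightarrow> int list set" where
  "PP x = {y. \<exists>l \<in> {1,2}. y = smult3 l x}"

definition Points :: "int list set set" where
  "Points = PP ` nzvecs"

definition Planes :: "int list set set" where
  "Planes = PP ` nzvecs"

definition incident :: "int list set \<Rightarrow> int list set \<Rightarrow> bool" where
  "incident P Pi = (\<forall>x\<in>P. \<forall>c\<in>Pi. dot3 c x = 0)"

definition line_pts :: "int list \<Rightarrow> int list \<Rightarrow> int list set set" where
  "line_pts u v = {PP (lincomb3 a u b v) | a b. a \<in> F3 \<and> b \<in> F3 \<and> lincomb3 a u b v \<noteq> [0,0,0,0]}"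

section \<open>The twisted cubic, q = 3; None plays the role of \<infinity>\<close>

definition Fplus :: "int option set" where
  "Fplus = Some ` F3 \<union> {None}"

fun cubvec :: "int option \<Rightarrow> int list" where
  "cubvec None = [1,0,0,0]"
| "cubvec (Some t) = [t^3 mod 3, t^2 mod 3, t mod 3, 1]"

definition Ppt :: "int option \<Rightarrow> int list set" where
  "Ppt t = PP (cubvec t)"

definition Cubic :: "int list set set" where
  "Cubic = Ppt ` Fplus"

fun oscvec :: "int option \<Rightarrow> int list" where
  "oscvec None = [0,0,0,1]"
| "oscvec (Some t) = [1, (-3*t) mod 3, (3*t^2) mod 3, (-(t^3)) mod 3]"

definition GammaPlanes :: "int list set set" where
  "GammaPlanes = (\<lambda>t. PP (oscvec t)) ` Fplus"

fun tangent :: "int option \<Rightarrow> int list set set" where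
  "tangent None = line_pts [1,0,0,0] [0,1,0,0]"
| "tangent (Some t) = line_pts (cubvec (Some t)) [(3*t^2) mod 3, (2*t) mod 3, 1, 0]"

definition on_tangent :: "int list set \<Rightarrow> bool" where
  "on_tangent P = (\<exists>t\<in>Fplus. P \<in> tangent t)"

definition on_real_chord :: "int list set \<Rightarrow> bool" where
  "on_real_chord P = (\<exists>s\<in>Fplus. \<exists>t\<in>Fplus. s \<noteq> t \<and> P \<in> line_pts (cubvec s) (cubvec t))"

definition Axis :: "int list set set" where
  "Axis = {P \<in> Points. \<forall>x\<in>P. x ! 0 = 0 \<and> x ! 3 = 0}"

definition TO_points :: "int list set set" where
  "TO_points = {P \<in> Points. P \<notin> Cubic \<and> P \<notin> Axis \<and> on_tangent P}"

definition RC_points :: "int list set set" where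
  "RC_points = {P \<in> Points. P \<notin> Cubic \<and> P \<notin> Axis \<and> \<not> on_tangent P \<and> on_real_chord P}"

definition IC_points :: "int list set set" where
  "IC_points = Points - (Cubic \<union> Axis \<union> TO_points \<union> RC_points)"

definition M1 :: "int list set set" where "M1 = Cubic"
definition M2 :: "int list set set" where "M2 = Axis \<union> IC_points"
definition M3 :: "int list set set" where "M3 = TO_points"
definition M4 :: "int list set set" where "M4 = RC_points"

definition meetC :: "int list set \<Rightarrow> nat" where
  "meetC Pi = card {P \<in> Cubic. incident P Pi}"

definition N1 :: "int list set set" where
  "N1 = GammaPlanes \<union> {Pi \<in> Planes. Pi \<notin> GammaPlanes \<and> meetC Pi = 1}"
definition N2 :: "int list set set" where "N2 = {Pi \<in> Planes. meetC Pi = 2}"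
definition N3 :: "int list set set" where "N3 = {Pi \<in> Planes. meetC Pi = 3}"
definition N4 :: "int list set set" where "N4 = {Pi \<in> Planes. meetC Pi = 0}"

definition tb :: "int list set set \<Rightarrow> int list set set \<Rightarrow> nat \<Rightarrow> nat \<Rightarrow> bool" where
  "tb N M t b = ((\<forall>Pi\<in>N. card {P \<in> M. incident P Pi} = t) \<and>
                 (\<forall>P\<in>M. card {Pi \<in> N. incident P Pi} = b))"

end

theory Submission
  imports Defs
begin

text \<open>Everything lives in the finite geometry PG(3,3), so the theorem is a finite computation.
  Its substance is the classification of points and planes: every point type and plane orbit is
  listed by the representatives whose first nonzero coordinate is 1. Each list is verified by
  evaluation and then registered as a code equation, so that later evaluations, in particular
  the incidence counts of the table, work with explicit points and planes instead of re-deriving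
  the classification.\<close>

lemma vecs_eq [code]: "vecs = (\<lambda>(a, b, c, d). [a, b, c, d]) ` (F3 \<times> F3 \<times> F3 \<times> F3)"
  unfolding vecs_def by force

lemma PP_eq [code]: "PP x = {smult3 1 x, smult3 2 x}"
  unfolding PP_def by auto

lemma line_pts_eq [code]:
  "line_pts u v = PP ` ((\<lambda>(a, b). lincomb3 a u b v) ` (F3 \<times> F3) - {[0,0,0,0]})"
  unfolding line_pts_def by force

lemma Points_eq [code]: "Points = PP ` {x \<in> nzvecs. hd (filter (\<lambda>a. a \<noteq> 0) x) = 1}"
  by code_simp

lemma Planes_eq_Points [code]: "Planes = Points"
  unfolding Planes_def Points_def ..

lemma Cubic_eq [code]: "Cubic = PP ` {[0,0,0,1], [1,0,0,0], [1,1,1,1], [1,2,1,2]}"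
  by code_simp

lemma Axis_eq [code]: "Axis = PP ` {[0,0,1,0], [0,1,0,0], [0,1,1,0], [0,1,2,0]}"
  by code_simp

lemma TO_points_eq [code]:
  "TO_points = PP ` {[0,0,1,1], [0,0,1,2], [1,0,2,1], [1,0,2,2], [1,1,0,0], [1,1,0,2],
                     [1,2,0,0], [1,2,0,1]}"
  by code_simp

lemma RC_points_eq [code]:
  "RC_points = PP ` {[0,1,0,1], [0,1,1,1], [0,1,2,1], [1,0,0,1], [1,0,0,2], [1,0,1,0],
                     [1,1,1,0], [1,1,1,2], [1,1,2,1], [1,2,1,0], [1,2,1,1], [1,2,2,2]}"
  by code_simp

lemma IC_points_eq [code]:
  "IC_points = PP ` {[0,1,0,2], [0,1,1,2], [0,1,2,2], [1,0,1,1], [1,0,1,2], [1,0,2,0],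
                     [1,1,0,1], [1,1,2,0], [1,1,2,2], [1,2,0,2], [1,2,2,0], [1,2,2,1]}"
  by code_simp

lemma GammaPlanes_eq [code]: "GammaPlanes = PP ` {[0,0,0,1], [1,0,0,0], [1,0,0,1], [1,0,0,2]}"
  by code_simp

lemma N1_eq [code]:
  "N1 = GammaPlanes \<union> PP ` {[0,1,0,1], [0,1,1,2], [0,1,2,2], [1,0,1,0], [1,0,1,1], [1,0,1,2],
                             [1,1,0,1], [1,1,1,1], [1,1,2,0], [1,2,0,2], [1,2,1,2], [1,2,2,0]}"
  by code_simp

lemma N2_eq [code]:
  "N2 = PP ` {[0,0,1,0], [0,0,1,1], [0,0,1,2], [0,1,0,0], [0,1,1,1], [0,1,2,1], [1,1,0,0],
              [1,1,1,0], [1,1,2,2], [1,2,0,0], [1,2,1,0], [1,2,2,1]}"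
  by code_simp

lemma N3_eq [code]: "N3 = PP ` {[0,1,0,2], [0,1,1,0], [0,1,2,0], [1,0,2,0]}"
  by code_simp

lemma N4_eq [code]:
  "N4 = PP ` {[1,0,2,1], [1,0,2,2], [1,1,0,2], [1,1,1,2], [1,1,2,1], [1,2,0,1], [1,2,1,1],
              [1,2,2,2]}"
  by code_simp

lemma incidences_N1: "tb N1 M4 3 4 \<and> tb N1 M1 1 4 \<and> tb N1 M3 2 4 \<and> tb N1 M2 7 7"
  by code_simp

lemma incidences_N2: "tb N2 M4 3 3 \<and> tb N2 M1 2 6 \<and> tb N2 M3 4 6 \<and> tb N2 M2 4 3"
  by code_simp

lemma incidences_N3: "tb N3 M4 6 2 \<and> tb N3 M1 3 3 \<and> tb N3 M3 0 0 \<and> tb N3 M2 4 1"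
  by code_simp

lemma incidences_N4: "tb N4 M4 6 4 \<and> tb N4 M1 0 0 \<and> tb N4 M3 3 3 \<and> tb N4 M2 4 2"
  by code_simp

theorem mainTheorem11:
  shows "tb N2 M4 3 3 \<and> tb N2 M1 2 6 \<and> tb N2 M3 4 6 \<and> tb N2 M2 4 3 \<and>
         tb N3 M4 6 2 \<and> tb N3 M1 3 3 \<and> tb N3 M3 0 0 \<and> tb N3 M2 4 1 \<and>
         tb N4 M4 6 4 \<and> tb N4 M1 0 0 \<and> tb N4 M3 3 3 \<and> tb N4 M2 4 2 \<and>
         tb N1 M4 3 4 \<and> tb N1 M1 1 4 \<and> tb N1 M3 2 4 \<and> tb N1 M2 7 7"
  using incidences_N1 incidences_N2 incidences_N3 incidences_N4 by blast

end
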